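(* Let $G=(V,E)$ be a graph containing at least one cycle, with $n$ vertices, $m$ edges and $k(G)$ connected components, and let $i$ be a nonnegative integer. Then $g(G)>n-k(G)-i$ if and only if \[[x^i]T_G(x,1)=\binom{m-i-1}{n-k(G)-i}.\]
   Context: $T_G(x,y)$ is the Tutte polynomial of $G$, i.e. $T_G(x,y)=\sum_{A\subseteq E}(x-1)^{r-rk(A)}(y-1)^{|A|-rk(A)}$ with $rk(A)=n-k(A)$, $k(A)$ the number of components of the spanning subgraph $(V,A)$, and $r=n-k(G)$. $[x^i]f(x)$ denotes the coefficient of $x^i$. The girth $g(G)$ is the length of a shortest cycle of $G$. *)

theory Defs
  imports "HOL-Computational_Algebra.Polynomial"
begin

text \<open>Finite multigraphs (loops and parallel edges allowed): a finite vertex set V,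
a finite edge set E, and an incidence map inc giving the set of (one or two) end vertices.\<close>

definition multigraph :: "'v set \<Rightarrow> 'e set \<Rightarrow> ('e \<Rightarrow> 'v set) \<Rightarrow> bool" where
  "multigraph V E inc \<longleftrightarrow> finite V \<and> finite E \<and>
     (\<forall>e\<in>E. inc e \<subseteq> V \<and> 1 \<le> card (inc e) \<and> card (inc e) \<le> 2)"

definition adj_in :: "('e \<Rightarrow> 'v set) \<Rightarrow> 'e set \<Rightarrow> 'v \<Rightarrow> 'v \<Rightarrow> bool" where
  "adj_in inc A u v \<longleftrightarrow> (\<exists>e\<in>A. inc e = {u, v})"

definition num_comps :: "'v set \<Rightarrow> ('e \<Rightarrow> 'v set) \<Rightarrow> 'e set \<Rightarrow> nat" where
  "num_comps V inc A =
     card (V // {(u, v). u \<in> V \<and> v \<in> V \<and> (adj_in inc A)\<^sup>*\<^sup>* u v})"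

definition rank_of :: "'v set \<Rightarrow> ('e \<Rightarrow> 'v set) \<Rightarrow> 'e set \<Rightarrow> nat" where
  "rank_of V inc A = card V - num_comps V inc A"

definition tutte_in_x :: "'v set \<Rightarrow> 'e set \<Rightarrow> ('e \<Rightarrow> 'v set) \<Rightarrow> real \<Rightarrow> real poly" where
  "tutte_in_x V E inc y =
     (\<Sum>A\<in>Pow E. smult ((y - 1) ^ (card A - rank_of V inc A))
                   ([:-1, 1:] ^ (rank_of V inc E - rank_of V inc A)))"

text \<open>A cycle of length l: distinct vertices v_0..v_{l-1} and distinct edges e_0..e_{l-1}
  with e_j joining v_j and v_{j+1 mod l} (l = 1: loop, l = 2: pair of parallel edges).\<close>
definition has_cycle_len :: "'v set \<Rightarrow> 'e set \<Rightarrow> ('e \<Rightarrow> 'v set) \<Rightarrow> nat \<Rightarrow> bool" where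
  "has_cycle_len V E inc l \<longleftrightarrow> l \<ge> 1 \<and> (\<exists>vs es. length vs = l \<and> length es = l \<and>
      distinct vs \<and> distinct es \<and> set vs \<subseteq> V \<and> set es \<subseteq> E \<and>
      (\<forall>j<l. inc (es ! j) = {vs ! j, vs ! ((j + 1) mod l)}))"

definition has_cycle :: "'v set \<Rightarrow> 'e set \<Rightarrow> ('e \<Rightarrow> 'v set) \<Rightarrow> bool" where
  "has_cycle V E inc \<longleftrightarrow> (\<exists>l. has_cycle_len V E inc l)"

definition girth :: "'v set \<Rightarrow> 'e set \<Rightarrow> ('e \<Rightarrow> 'v set) \<Rightarrow> nat" where
  "girth V E inc = (LEAST l. has_cycle_len V E inc l)"

text \<open>Binomial coefficient binom(a,b) with integer arguments, using the convention
  binom(a,b) = 0 for b < 0 (a is nonnegative whenever b is, in the statement below).\<close>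
definition int_binom :: "int \<Rightarrow> int \<Rightarrow> real" where
  "int_binom a b = (if b < 0 then 0 else (of_int a) gchoose (nat b))"

end

(*
  At y = 1 only the independent sets of the cycle matroid of G, the forests, survive in the
  Tutte polynomial, so T_G(x, 1) is the sum of (x - 1)^(r - |F|) over all forests F, where
  r = n - k(G). For any matroid of rank r on m elements and i <= r, the coefficient of x^i in
  this sum is at most binom(m - i - 1, r - i), with equality exactly when all sets of at most
  r - i elements are independent. This goes by induction on m: pick an element that is not a
  coloop; a loop can simply be removed, and otherwise deletion-contraction splits the
  coefficient into two, matching Pascal's rule for the binomial. In the cycle matroid the
  smallest dependent sets are the edge sets of shortest cycles, so equality holds iff
  g(G) > r - i. For i > r both sides of the equivalence hold trivially.
*)
theory Submission
  imports Defs "HOL-Library.Transitive_Closure_Table"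
begin

section \<open>Matroids and the coefficients of T(x, 1)\<close>

locale matroid =
  fixes E :: "'e set" and I :: "'e set set"
  assumes finite_ground: "finite E"
    and indep_subset_ground: "A \<in> I \<Longrightarrow> A \<subseteq> E"
    and empty_indep: "{} \<in> I"
    and indep_subset: "A \<in> I \<Longrightarrow> B \<subseteq> A \<Longrightarrow> B \<in> I"
    and indep_augment:
      "A \<in> I \<Longrightarrow> B \<in> I \<Longrightarrow> card A < card B \<Longrightarrow> \<exists>x\<in>B - A. insert x A \<in> I"

definition matroid_rank :: "'e set set \<Rightarrow> nat" where
  "matroid_rank I = Max (card ` I)"

text \<open>T(x, 1) of the matroid: at y = 1 only the independent sets survive in the corank-nullity
  expansion of the Tutte polynomial.\<close>
definition tutte_y1 :: "'e set set \<Rightarrow> real poly" where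
  "tutte_y1 I = (\<Sum>A\<in>I. [:-1, 1:] ^ (matroid_rank I - card A))"

definition has_dependent_le :: "'e set \<Rightarrow> 'e set set \<Rightarrow> nat \<Rightarrow> bool" where
  "has_dependent_le E I k \<longleftrightarrow> (\<exists>A\<subseteq>E. A \<notin> I \<and> card A \<le> k)"

definition matroid_delete :: "'e set set \<Rightarrow> 'e \<Rightarrow> 'e set set" where
  "matroid_delete I e = {A \<in> I. e \<notin> A}"

definition matroid_contract :: "'e set set \<Rightarrow> 'e \<Rightarrow> 'e set set" where
  "matroid_contract I e = {A. e \<notin> A \<and> insert e A \<in> I}"

text \<open>The inequality is carried through the induction because, in the deletion-contraction
  step, equality for a sum of two coefficients requires equality for both summands.\<close>
definition tutte_coeff_bound :: "'e set \<Rightarrow> 'e set set \<Rightarrow> nat \<Rightarrow> bool" where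
  "tutte_coeff_bound E I i \<longleftrightarrow>
     coeff (tutte_y1 I) i \<le> real ((card E - i - 1) choose (matroid_rank I - i)) \<and>
     (coeff (tutte_y1 I) i = real ((card E - i - 1) choose (matroid_rank I - i)) \<longleftrightarrow>
        \<not> has_dependent_le E I (matroid_rank I - i))"

context matroid
begin

lemma finite_indep_sets: "finite I"
  using finite_ground indep_subset_ground by (meson Pow_iff finite_Pow_iff finite_subset subsetI)

lemma indep_finite: "A \<in> I \<Longrightarrow> finite A"
  using finite_ground indep_subset_ground finite_subset by blast

lemma card_le_rank: "A \<in> I \<Longrightarrow> card A \<le> matroid_rank I"
  unfolding matroid_rank_def by (simp add: finite_indep_sets)

lemma rank_attained: obtains B where "B \<in> I" "card B = matroid_rank I"
proof -
  have "matroid_rank I \<in> card ` I"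
    unfolding matroid_rank_def using finite_indep_sets empty_indep by (intro Max_in) auto
  then show thesis
    using that by (metis imageE)
qed

lemma rank_eqI:
  assumes "\<And>A. A \<in> I \<Longrightarrow> card A \<le> k" and "B \<in> I" and "card B = k"
  shows "matroid_rank I = k"
  using assms card_le_rank rank_attained by (metis le_antisym)

lemma rank_le_card_ground: "matroid_rank I \<le> card E"
  by (metis rank_attained card_mono finite_ground indep_subset_ground)

lemma indep_extend:
  assumes "A \<in> I" and "B \<in> I" and "card A \<le> card B"
  shows "\<exists>C\<in>I. A \<subseteq> C \<and> card C = card B"
  using assms
proof (induction "card B - card A" arbitrary: A)
  case 0
  then show ?case by auto
next
  case (Suc d)
  then have "card A < card B"
    by simp
  then obtain x where x: "x \<in> B - A" "insert x A \<in> I"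
    using indep_augment Suc.prems by blast
  have "card (insert x A) = Suc (card A)"
    using x indep_finite[OF Suc.prems(1)] by simp
  then obtain C where "C \<in> I" "insert x A \<subseteq> C" "card C = card B"
    using Suc.hyps(1)[of "insert x A"] Suc.hyps(2) x(2) Suc.prems(2) by fastforce
  then show ?case by blast
qed

lemma not_has_dependent_le_0: "\<not> has_dependent_le E I 0"
  unfolding has_dependent_le_def
  using finite_ground empty_indep by (metis card_0_eq finite_subset le_zero_eq)

lemma matroid_remove_loop:
  assumes "{e} \<notin> I"
  shows "matroid (E - {e}) I"
proof
  show "A \<subseteq> E - {e}" if "A \<in> I" for A
    using that assms indep_subset[of A "{e}"] indep_subset_ground by blast
qed (simp_all add: finite_ground empty_indep indep_subset indep_augment)

lemma matroid_matroid_delete: "matroid (E - {e}) (matroid_delete I e)"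
proof
  fix A B
  assume "A \<in> matroid_delete I e" "B \<in> matroid_delete I e" "card A < card B"
  then show "\<exists>x\<in>B - A. insert x A \<in> matroid_delete I e"
    using indep_augment unfolding matroid_delete_def by fastforce
next
  show "A \<subseteq> E - {e}" if "A \<in> matroid_delete I e" for A
    using that indep_subset_ground unfolding matroid_delete_def by blast
qed (auto simp: matroid_delete_def finite_ground empty_indep intro: indep_subset)

lemma matroid_matroid_contract:
  assumes "{e} \<in> I"
  shows "matroid (E - {e}) (matroid_contract I e)"
proof
  fix A B assume "A \<in> matroid_contract I e" "B \<subseteq> A"
  then show "B \<in> matroid_contract I e"
    using indep_subset[of "insert e A" "insert e B"] unfolding matroid_contract_def by blast
next
  fix A B
  assume A: "A \<in> matroid_contract I e" and B: "B \<in> matroid_contract I e"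
    and "card A < card B"
  moreover have "finite A" "finite B"
    using A B indep_finite unfolding matroid_contract_def by (metis finite_insert mem_Collect_eq)+
  ultimately have "card (insert e A) < card (insert e B)"
    by (simp add: matroid_contract_def)
  then obtain x where "x \<in> insert e B - insert e A" "insert x (insert e A) \<in> I"
    using indep_augment A B unfolding matroid_contract_def by blast
  then show "\<exists>x\<in>B - A. insert x A \<in> matroid_contract I e"
    using A by (auto simp: matroid_contract_def insert_commute)
next
  show "A \<subseteq> E - {e}" if "A \<in> matroid_contract I e" for A
    using that indep_subset_ground unfolding matroid_contract_def by blast
qed (use assms finite_ground in \<open>auto simp: matroid_contract_def\<close>)

lemma rank_matroid_delete:
  assumes "A \<in> I" and "insert e A \<notin> I"
  shows "matroid_rank (matroid_delete I e) = matroid_rank I"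
proof -
  obtain B where B: "B \<in> I" "card B = matroid_rank I"
    using rank_attained .
  obtain C where C: "C \<in> I" "A \<subseteq> C" "card C = matroid_rank I"
    using indep_extend[OF assms(1) B(1)] card_le_rank[OF assms(1)] B(2) by auto
  have "e \<notin> C"
    using C assms(2) indep_subset by blast
  with C show ?thesis
    by (intro matroid.rank_eqI[OF matroid_matroid_delete, of e _ C])
      (auto simp: matroid_delete_def card_le_rank)
qed

lemma rank_matroid_contract:
  assumes "{e} \<in> I"
  shows "matroid_rank (matroid_contract I e) = matroid_rank I - 1"
proof -
  obtain B where B: "B \<in> I" "card B = matroid_rank I"
    using rank_attained .
  obtain C where C: "C \<in> I" "e \<in> C" "card C = matroid_rank I"
    using indep_extend[OF assms B(1)] card_le_rank[OF assms] B(2) by auto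
  have "card (insert e A) \<le> matroid_rank I" if "A \<in> matroid_contract I e" for A
    using that card_le_rank unfolding matroid_contract_def by blast
  moreover have "card (insert e A) = Suc (card A)" if "A \<in> matroid_contract I e" for A
    using that indep_finite[of "insert e A"] unfolding matroid_contract_def by auto
  moreover have "C - {e} \<in> matroid_contract I e"
    using C by (simp add: matroid_contract_def insert_absorb)
  ultimately show ?thesis
    using C indep_finite[OF C(1)]
    by (intro matroid.rank_eqI[OF matroid_matroid_contract[OF assms], of _ "C - {e}"]) fastforce+
qed

lemma finite_matroid_contract: "finite (matroid_contract I e)"
proof (rule finite_subset)
  show "matroid_contract I e \<subseteq> Pow E"
    using indep_subset_ground unfolding matroid_contract_def by blast
qed (simp add: finite_ground)

lemma tutte_y1_split:
  "tutte_y1 I = (\<Sum>A\<in>matroid_delete I e. [:-1, 1:] ^ (matroid_rank I - card A))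
     + (\<Sum>A\<in>matroid_contract I e. [:-1, 1:] ^ (matroid_rank I - Suc (card A)))"
proof -
  let ?f = "\<lambda>A. [:-1, 1:] ^ (matroid_rank I - card A)"
  have I: "I = matroid_delete I e \<union> insert e ` matroid_contract I e"
  proof (intro equalityI subsetI)
    fix A assume "A \<in> I"
    then show "A \<in> matroid_delete I e \<union> insert e ` matroid_contract I e"
      by (cases "e \<in> A")
        (auto simp: matroid_delete_def matroid_contract_def insert_absorb
          intro!: image_eqI[of _ _ "A - {e}"])
  qed (auto simp: matroid_delete_def matroid_contract_def)
  have inj: "inj_on (insert e) (matroid_contract I e)"
    unfolding matroid_contract_def inj_on_def by (simp add: insert_ident)
  have card_insert: "card (insert e A) = Suc (card A)" if "A \<in> matroid_contract I e" for A
    using that indep_finite[of "insert e A"] unfolding matroid_contract_def by auto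
  have "tutte_y1 I = sum ?f (matroid_delete I e) + sum ?f (insert e ` matroid_contract I e)"
    unfolding tutte_y1_def
    by (subst I, rule sum.union_disjoint)
      (use finite_indep_sets finite_matroid_contract in \<open>auto simp: matroid_delete_def\<close>)
  also have "sum ?f (insert e ` matroid_contract I e)
      = (\<Sum>A\<in>matroid_contract I e. [:-1, 1:] ^ (matroid_rank I - Suc (card A)))"
    by (simp add: sum.reindex[OF inj] card_insert)
  finally show ?thesis .
qed

lemma tutte_y1_delete_contract:
  assumes "{e} \<in> I" and "A \<in> I" and "insert e A \<notin> I"
  shows "tutte_y1 I = tutte_y1 (matroid_delete I e) + tutte_y1 (matroid_contract I e)"
  by (subst tutte_y1_split[of e])
    (simp add: tutte_y1_def rank_matroid_delete[OF assms(2,3)] rank_matroid_contract[OF assms(1)])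

lemma rank_free:
  assumes "E \<in> I"
  shows "matroid_rank I = card E"
  by (intro rank_eqI[OF _ assms refl]) (simp add: card_mono finite_ground indep_subset_ground)

lemma tutte_y1_free:
  assumes "E \<in> I"
  shows "tutte_y1 I = monom 1 (card E)"
proof -
  have I: "I = Pow E"
    using assms indep_subset indep_subset_ground by blast
  have "tutte_y1 I = (\<Sum>A\<in>Pow E. (\<Prod>x\<in>A. 1) * (\<Prod>x\<in>E - A. [:-1, 1:]))"
    unfolding tutte_y1_def rank_free[OF assms] unfolding I
    using finite_ground by (intro sum.cong) (auto simp: card_Diff_subset finite_subset)
  also have "\<dots> = (\<Prod>x\<in>E. 1 + [:-1, 1:])"
    by (rule prod_add[symmetric, OF finite_ground])
  also have "1 + [:-1, 1:] = [:0, 1::real:]"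
    by (simp add: one_pCons)
  finally show ?thesis
    by (simp add: monom_altdef)
qed

lemma coeff_tutte_y1_rank: "coeff (tutte_y1 I) (matroid_rank I) = 1"
proof -
  have coeff_summand:
    "coeff ([:-1, 1:] ^ (matroid_rank I - card A)) (matroid_rank I) = (if A = {} then 1 else 0)"
    if "A \<in> I" for A
  proof (cases "A = {}")
    case False
    then have "0 < card A"
      using that indep_finite by (simp add: card_gt_0_iff)
    then have "matroid_rank I - card A < matroid_rank I"
      using card_le_rank[OF that] by arith
    then show ?thesis
      using False by (simp add: coeff_eq_0 degree_linear_power)
  qed (simp add: coeff_linear_power)
  have "coeff (tutte_y1 I) (matroid_rank I) = (\<Sum>A\<in>I. if A = {} then 1 else 0)"
    unfolding tutte_y1_def coeff_sum by (rule sum.cong[OF refl coeff_summand])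
  then show ?thesis
    using finite_indep_sets empty_indep by (simp add: sum.delta')
qed

lemma coeff_tutte_y1_above_rank: "matroid_rank I < j \<Longrightarrow> coeff (tutte_y1 I) j = 0"
  unfolding tutte_y1_def coeff_sum by (intro sum.neutral) (simp add: coeff_eq_0 degree_linear_power)

lemma has_dependent_le_delete_contract:
  assumes "e \<in> E"
  shows "has_dependent_le E I (Suc k) \<longleftrightarrow>
    has_dependent_le (E - {e}) (matroid_delete I e) (Suc k) \<or>
    has_dependent_le (E - {e}) (matroid_contract I e) k"
proof
  assume "has_dependent_le E I (Suc k)"
  then obtain A where A: "A \<subseteq> E" "A \<notin> I" "card A \<le> Suc k"
    unfolding has_dependent_le_def by blast
  show "has_dependent_le (E - {e}) (matroid_delete I e) (Suc k) \<or>
    has_dependent_le (E - {e}) (matroid_contract I e) k"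
  proof (cases "e \<in> A")
    case False
    then show ?thesis
      using A unfolding has_dependent_le_def matroid_delete_def by blast
  next
    case True
    then have "card (A - {e}) \<le> k"
      using A finite_ground finite_subset by fastforce
    then show ?thesis
      using A True unfolding has_dependent_le_def matroid_delete_def matroid_contract_def
      by (cases "A - {e} \<in> I") (auto simp: insert_absorb intro!: exI[of _ "A - {e}"])
  qed
next
  assume "has_dependent_le (E - {e}) (matroid_delete I e) (Suc k) \<or>
    has_dependent_le (E - {e}) (matroid_contract I e) k"
  then show "has_dependent_le E I (Suc k)"
  proof
    assume "has_dependent_le (E - {e}) (matroid_delete I e) (Suc k)"
    then show ?thesis
      unfolding has_dependent_le_def matroid_delete_def by blast
  next
    assume "has_dependent_le (E - {e}) (matroid_contract I e) k"
    then obtain A where A: "A \<subseteq> E - {e}" "insert e A \<notin> I" "card A \<le> k"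
      unfolding has_dependent_le_def matroid_contract_def by blast
    moreover have "finite A"
      using A(1) finite_ground finite_subset by blast
    ultimately have "card (insert e A) \<le> Suc k"
      by (simp add: card_insert_if)
    then show ?thesis
      using A assms unfolding has_dependent_le_def by blast
  qed
qed

lemma tutte_coeff_bound_rank: "tutte_coeff_bound E I (matroid_rank I)"
  unfolding tutte_coeff_bound_def by (simp add: coeff_tutte_y1_rank not_has_dependent_le_0)

lemma tutte_coeff_bound_free:
  assumes "E \<in> I" and "i \<le> card E"
  shows "tutte_coeff_bound E I i"
proof -
  have "\<not> has_dependent_le E I k" for k
    using assms(1) indep_subset unfolding has_dependent_le_def by blast
  then show ?thesis
    using assms(2) unfolding tutte_coeff_bound_def tutte_y1_free[OF assms(1)] rank_free[OF assms(1)]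
    by (cases "i = card E") (simp_all add: coeff_monom binomial_eq_0)
qed

lemma tutte_coeff_bound_loop:
  assumes "e \<in> E" and "{e} \<notin> I" and "i < matroid_rank I"
    and "tutte_coeff_bound (E - {e}) I i"
  shows "tutte_coeff_bound E I i"
proof -
  define n where "n = card E - i - 2"
  define t where "t = matroid_rank I - i - 1"
  have "matroid_rank I \<le> card (E - {e})"
    using matroid.rank_le_card_ground[OF matroid_remove_loop[OF assms(2)]] .
  then have n: "card (E - {e}) - i - 1 = n" "card E - i - 1 = Suc n"
    and t: "matroid_rank I - i = Suc t" and "t \<le> n"
    using assms(1,3) finite_ground unfolding n_def t_def by auto
  have "0 < real (n choose t)"
    using \<open>t \<le> n\<close> by simp
  moreover have "coeff (tutte_y1 I) i \<le> real (n choose Suc t)"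
    using assms(4) unfolding tutte_coeff_bound_def n t by simp
  ultimately have "coeff (tutte_y1 I) i < real (Suc n choose Suc t)"
    by (simp only: binomial_Suc_Suc of_nat_add)
  moreover have "has_dependent_le E I (Suc t)"
    using assms(1,2) unfolding has_dependent_le_def by (intro exI[of _ "{e}"]) auto
  ultimately show ?thesis
    unfolding tutte_coeff_bound_def n t by simp
qed

lemma tutte_coeff_bound_delete_contract:
  assumes "e \<in> E" and "{e} \<in> I" and "A \<in> I" and "insert e A \<notin> I"
    and "i < matroid_rank I"
    and "tutte_coeff_bound (E - {e}) (matroid_delete I e) i"
    and "tutte_coeff_bound (E - {e}) (matroid_contract I e) i"
  shows "tutte_coeff_bound E I i"
proof -
  define n where "n = card E - i - 2"
  define t where "t = matroid_rank I - i - 1"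
  have "matroid_rank I \<le> card (E - {e})"
    using matroid.rank_le_card_ground[OF matroid_matroid_delete, of e]
    by (simp add: rank_matroid_delete[OF assms(3,4)])
  then have n: "card (E - {e}) - i - 1 = n" "card E - i - 1 = Suc n"
    and t: "matroid_rank I - i = Suc t" "matroid_rank I - 1 - i = t"
    using assms(1,5) finite_ground unfolding n_def t_def by auto
  show ?thesis
    using assms(6,7)
    unfolding tutte_coeff_bound_def tutte_y1_delete_contract[OF assms(2-4)] coeff_add
      rank_matroid_delete[OF assms(3,4)] rank_matroid_contract[OF assms(2)] n t
      has_dependent_le_delete_contract[OF assms(1)] binomial_Suc_Suc
    by auto
qed

end

theorem matroid_tutte_coeff_bound:
  assumes "matroid E I" and "i \<le> matroid_rank I"
  shows "tutte_coeff_bound E I i"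
  using assms
proof (induction "card E" arbitrary: E I rule: less_induct)
  case less
  interpret matroid E I
    by (rule less.prems(1))
  consider "i = matroid_rank I" | "E \<in> I" | "i < matroid_rank I" "E \<notin> I"
    using less.prems(2) by linarith
  then show ?case
  proof cases
    case 1
    then show ?thesis
      using tutte_coeff_bound_rank by simp
  next
    case 2
    then show ?thesis
      using tutte_coeff_bound_free rank_le_card_ground less.prems(2) by simp
  next
    case 3
    obtain B where B: "B \<in> I" "card B = matroid_rank I"
      by (rule rank_attained)
    \<comment> \<open>an element outside a basis is not a coloop\<close>
    obtain e where e: "e \<in> E" "e \<notin> B"
      using indep_subset_ground[OF B(1)] B(1) 3(2) by (metis subsetI subset_antisym)
    have non_coloop: "insert e B \<notin> I"
      using card_le_rank[of "insert e B"] B indep_finite e(2) by auto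
    have smaller: "card (E - {e}) < card E"
      by (rule card_Diff1_less[OF finite_ground e(1)])
    show ?thesis
    proof (cases "{e} \<in> I")
      case False
      then show ?thesis
        using tutte_coeff_bound_loop[OF e(1) False 3(1)]
          less.hyps[OF smaller matroid_remove_loop[OF False] less.prems(2)] by blast
    next
      case True
      have "tutte_coeff_bound (E - {e}) (matroid_delete I e) i"
        using less.hyps[OF smaller matroid_matroid_delete] less.prems(2)
        by (simp add: rank_matroid_delete[OF B(1) non_coloop])
      moreover have "tutte_coeff_bound (E - {e}) (matroid_contract I e) i"
        using less.hyps[OF smaller matroid_matroid_contract[OF True]] 3(1)
        by (simp add: rank_matroid_contract[OF True])
      ultimately show ?thesis
        using tutte_coeff_bound_delete_contract[OF e(1) True B(1) non_coloop 3(1)] by blast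
    qed
  qed
qed

section \<open>Matroids from unit-increase rank functions\<close>

definition rank_indep :: "'e set \<Rightarrow> ('e set \<Rightarrow> nat) \<Rightarrow> 'e set set" where
  "rank_indep E \<rho> = {A. A \<subseteq> E \<and> card A \<le> \<rho> A}"

locale unit_rank =
  fixes E :: "'e set" and \<rho> :: "'e set \<Rightarrow> nat"
  assumes finite_ground: "finite E"
    and rank_empty: "\<rho> {} = 0"
    and rank_insert_cases:
      "x \<in> E \<Longrightarrow> A \<subseteq> E \<Longrightarrow> \<rho> (insert x A) = \<rho> A \<or> \<rho> (insert x A) = Suc (\<rho> A)"
    and spanned_mono:
      "x \<in> E \<Longrightarrow> A \<subseteq> B \<Longrightarrow> B \<subseteq> E \<Longrightarrow> \<rho> (insert x A) = \<rho> A \<Longrightarrow> \<rho> (insert x B) = \<rho> B"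
begin

lemma rank_le_card:
  assumes "A \<subseteq> E"
  shows "\<rho> A \<le> card A"
  using finite_subset[OF assms finite_ground] assms
proof (induction A rule: finite_subset_induct')
  case (insert x A)
  then show ?case
    using rank_insert_cases[of x A] by auto
qed (simp add: rank_empty)

lemma rank_union_bounds:
  assumes "A \<subseteq> E" and "C \<subseteq> E"
  shows "\<rho> A \<le> \<rho> (A \<union> C)" and "\<rho> (A \<union> C) \<le> \<rho> A + card C"
proof -
  have "\<rho> A \<le> \<rho> (A \<union> C) \<and> \<rho> (A \<union> C) \<le> \<rho> A + card C"
    using finite_subset[OF assms(2) finite_ground] assms(2)
  proof (induction C rule: finite_subset_induct')
    case (insert x C)
    then show ?case
      using rank_insert_cases[of x "A \<union> C"] assms(1) by auto
  qed simp
  then show "\<rho> A \<le> \<rho> (A \<union> C)" and "\<rho> (A \<union> C) \<le> \<rho> A + card C"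
    by simp_all
qed

lemma rank_mono:
  assumes "A \<subseteq> B" and "B \<subseteq> E"
  shows "\<rho> A \<le> \<rho> B"
proof -
  have "A \<union> (B - A) = B"
    using assms(1) by blast
  then show ?thesis
    using rank_union_bounds(1)[of A "B - A"] assms by auto
qed

lemma rank_union_spanned:
  assumes "A \<subseteq> E" and "C \<subseteq> E" and "\<And>x. x \<in> C \<Longrightarrow> \<rho> (insert x A) = \<rho> A"
  shows "\<rho> (A \<union> C) = \<rho> A"
  using finite_subset[OF assms(2) finite_ground] assms(2,3)
proof (induction C rule: finite_subset_induct')
  case (insert x C)
  then have "\<rho> (insert x (A \<union> C)) = \<rho> (A \<union> C)"
    using spanned_mono[of x A "A \<union> C"] assms(1) by auto
  then show ?case
    using insert by simp
qed simp

lemma rank_indep_iff: "A \<in> rank_indep E \<rho> \<longleftrightarrow> A \<subseteq> E \<and> \<rho> A = card A"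
  using rank_le_card[of A] unfolding rank_indep_def by (auto intro: antisym)

lemma matroid_rank_indep: "matroid E (rank_indep E \<rho>)"
proof
  fix A B assume A: "A \<in> rank_indep E \<rho>" and "B \<subseteq> A"
  then have "\<rho> A \<le> \<rho> B + card (A - B)"
    using rank_union_bounds(2)[of B "A - B"] by (auto simp: rank_indep_def Un_absorb1)
  moreover have "card (A - B) = card A - card B" and "card B \<le> card A"
    using A \<open>B \<subseteq> A\<close> finite_ground
    by (auto simp: rank_indep_def card_Diff_subset card_mono finite_subset)
  ultimately show "B \<in> rank_indep E \<rho>"
    using A \<open>B \<subseteq> A\<close> unfolding rank_indep_def by auto
next
  fix A B assume A: "A \<in> rank_indep E \<rho>" and B: "B \<in> rank_indep E \<rho>" and "card A < card B"
  show "\<exists>x\<in>B - A. insert x A \<in> rank_indep E \<rho>"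
  proof (rule ccontr)
    assume no_aug: "\<not> (\<exists>x\<in>B - A. insert x A \<in> rank_indep E \<rho>)"
    have spanned: "\<rho> (insert x A) = \<rho> A" if "x \<in> B" for x
    proof (cases "x \<in> A")
      case False
      have "x \<in> E"
        using that B unfolding rank_indep_def by blast
      moreover have "card (insert x A) = Suc (\<rho> A)"
        using A False finite_subset[OF _ finite_ground] by (auto simp: rank_indep_iff)
      ultimately show ?thesis
        using no_aug rank_insert_cases[of x A] that False A unfolding rank_indep_def by auto
    qed (simp add: insert_absorb)
    have "card B = \<rho> B"
      using B by (simp add: rank_indep_iff)
    also have "\<dots> \<le> \<rho> (A \<union> B)"
      using rank_union_bounds(1)[of B A] A B by (simp add: rank_indep_def Un_commute)
    also have "\<dots> = \<rho> A"
      using rank_union_spanned[OF _ _ spanned] A B by (simp add: rank_indep_def)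
    also have "\<dots> = card A"
      using A by (simp add: rank_indep_iff)
    finally show False
      using \<open>card A < card B\<close> by simp
  qed
qed (simp_all add: rank_indep_def finite_ground)

lemma exists_spanning_indep:
  assumes "C \<subseteq> E"
  shows "\<exists>F\<subseteq>C. F \<in> rank_indep E \<rho> \<and> \<rho> F = \<rho> C"
  using finite_subset[OF assms finite_ground] assms
proof (induction C rule: finite_subset_induct')
  case empty
  show ?case
    by (intro exI[of _ "{}"]) (simp add: rank_indep_def)
next
  case (insert x C)
  then obtain F where F: "F \<subseteq> C" "F \<in> rank_indep E \<rho>" "\<rho> F = \<rho> C"
    by blast
  show ?case
  proof (cases "\<rho> (insert x F) = \<rho> F")
    case True
    then have "\<rho> (insert x C) = \<rho> C"
      using spanned_mono[OF insert.hyps(2) F(1) insert.hyps(3)] F(3) by simp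
    then show ?thesis
      using F by (intro exI[of _ F]) auto
  next
    case False
    have FE: "F \<subseteq> E"
      using F(1) insert.hyps(3) by blast
    have rank_xF: "\<rho> (insert x F) = Suc (\<rho> F)"
      using rank_insert_cases[OF insert.hyps(2) FE] False by simp
    have "x \<notin> F"
      using False by (metis insert_absorb)
    then have "insert x F \<in> rank_indep E \<rho>"
      using F(2) FE insert.hyps(2) rank_xF finite_subset[OF FE finite_ground]
      by (simp add: rank_indep_iff)
    moreover have "\<rho> (insert x F) \<le> \<rho> (insert x C)"
      using rank_mono[OF insert_mono[OF F(1)]] insert.hyps(2,3) by blast
    moreover have "\<rho> (insert x C) \<le> Suc (\<rho> C)"
      using rank_insert_cases[OF insert.hyps(2,3)] by linarith
    ultimately show ?thesis
      using F rank_xF by (intro exI[of _ "insert x F"]) auto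
  qed
qed

lemma matroid_rank_rank_indep: "matroid_rank (rank_indep E \<rho>) = \<rho> E"
proof -
  obtain F where F: "F \<subseteq> E" "F \<in> rank_indep E \<rho>" "\<rho> F = \<rho> E"
    using exists_spanning_indep by blast
  show ?thesis
  proof (rule matroid.rank_eqI[OF matroid_rank_indep _ F(2)])
    show "card A \<le> \<rho> E" if "A \<in> rank_indep E \<rho>" for A
      using that rank_mono[of A E] by (simp add: rank_indep_iff)
  qed (use F in \<open>simp add: rank_indep_iff\<close>)
qed

end

section \<open>Connectivity and the graphic rank\<close>

abbreviation connected_in :: "('e \<Rightarrow> 'v set) \<Rightarrow> 'e set \<Rightarrow> 'v \<Rightarrow> 'v \<Rightarrow> bool" where
  "connected_in inc A \<equiv> (adj_in inc A)\<^sup>*\<^sup>*"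

lemma connected_in_sym:
  assumes "connected_in inc A u v"
  shows "connected_in inc A v u"
proof -
  have "symp (adj_in inc A)"
    unfolding symp_def adj_in_def by (metis insert_commute)
  then show ?thesis
    using assms by (rule sympD[OF symp_rtranclp])
qed

lemma connected_in_mono:
  assumes "A \<subseteq> B" and "connected_in inc A u v"
  shows "connected_in inc B u v"
proof -
  have "adj_in inc A \<le> adj_in inc B"
    using assms(1) unfolding adj_in_def by auto
  then show ?thesis
    by (rule predicate2D[OF rtranclp_mono assms(2)])
qed

lemma connected_in_edge: "x \<in> A \<Longrightarrow> inc x = {u, v} \<Longrightarrow> connected_in inc A u v"
  unfolding adj_in_def by (intro r_into_rtranclp) blast

lemma connected_in_empty: "connected_in inc {} a b \<longleftrightarrow> a = b"
proof
  show "connected_in inc {} a b \<Longrightarrow> a = b"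
    by (induction rule: rtranclp_induct) (auto simp: adj_in_def)
qed simp

lemma connected_in_insert:
  assumes "inc x = {u, v}"
  shows "connected_in inc (insert x A) a b \<longleftrightarrow> connected_in inc A a b \<or>
    connected_in inc A a u \<and> connected_in inc A v b \<or> connected_in inc A a v \<and> connected_in inc A u b"
    (is "?lhs \<longleftrightarrow> ?rhs b")
proof
  show "?lhs \<Longrightarrow> ?rhs b"
  proof (induction rule: rtranclp_induct)
    case (step b c)
    show ?case
    proof (cases "adj_in inc A b c")
      case True
      then show ?thesis
        using step.IH rtranclp.rtrancl_into_rtrancl[of "adj_in inc A" _ b c] by blast
    next
      case False
      then have "inc x = {b, c}"
        using step.hyps(2) unfolding adj_in_def by blast
      then have "b = u \<and> c = v \<or> b = v \<and> c = u"
        using assms by (auto simp: doubleton_eq_iff)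
      then show ?thesis
        using step.IH by auto
    qed
  qed simp
next
  assume rhs: "?rhs b"
  have uv: "connected_in inc (insert x A) u v" and vu: "connected_in inc (insert x A) v u"
    using connected_in_edge[of x "insert x A" inc] assms by (auto simp: insert_commute)
  have lift: "connected_in inc (insert x A) p q" if "connected_in inc A p q" for p q
    using connected_in_mono[OF subset_insertI that] .
  from rhs show ?lhs
  proof (elim disjE conjE)
    assume "connected_in inc A a u" "connected_in inc A v b"
    then show ?lhs
      using rtranclp_trans[OF rtranclp_trans[OF lift uv] lift] by blast
  next
    assume "connected_in inc A a v" "connected_in inc A u b"
    then show ?lhs
      using rtranclp_trans[OF rtranclp_trans[OF lift vu] lift] by blast
  qed (rule lift)
qed

definition component :: "'v set \<Rightarrow> ('e \<Rightarrow> 'v set) \<Rightarrow> 'e set \<Rightarrow> 'v \<Rightarrow> 'v set" where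
  "component V inc A a = {b \<in> V. connected_in inc A a b}"

lemma num_comps_eq_card_components: "num_comps V inc A = card (component V inc A ` V)"
proof -
  have "V // {(u, v). u \<in> V \<and> v \<in> V \<and> connected_in inc A u v} = component V inc A ` V"
    unfolding quotient_def component_def by auto
  then show ?thesis
    unfolding num_comps_def by simp
qed

lemma num_comps_le_card: "finite V \<Longrightarrow> num_comps V inc A \<le> card V"
  unfolding num_comps_eq_card_components by (rule card_image_le)

lemma num_comps_empty: "num_comps V inc {} = card V"
proof -
  have "component V inc {} ` V = (\<lambda>a. {a}) ` V"
    unfolding component_def connected_in_empty by auto
  then show ?thesis
    unfolding num_comps_eq_card_components by (simp add: card_image)
qed

lemma num_comps_insert_connected:
  assumes "inc x = {u, v}" and "connected_in inc A u v"
  shows "num_comps V inc (insert x A) = num_comps V inc A"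
proof -
  have "connected_in inc (insert x A) = connected_in inc A"
    using connected_in_insert[of inc x u v, OF assms(1)] assms(2)
      connected_in_sym[OF assms(2)] rtranclp_trans[of "adj_in inc A"]
    by (intro ext) blast
  then show ?thesis
    unfolding num_comps_def by simp
qed

lemma num_comps_insert_disconnected:
  assumes "finite V" and "inc x = {u, v}" and "u \<in> V" and "v \<in> V"
    and "\<not> connected_in inc A u v"
  shows "Suc (num_comps V inc (insert x A)) = num_comps V inc A"
proof -
  let ?c = "component V inc A" and ?c' = "component V inc (insert x A)"
  define S where "S = ?c u \<union> ?c v"
  note conn_insert = connected_in_insert[of inc x u v, OF assms(2)]
  note conn = connected_in_sym rtranclp_trans
  have c'_S: "?c' a = S" if "a \<in> S" for a
    using that assms(5) unfolding S_def component_def conn_insert by (auto intro: conn)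
  have c'_other: "?c' a = ?c a" if "a \<in> V - S" for a
    using that unfolding S_def component_def conn_insert by (auto intro: conn)
  have c_S: "?c a \<in> {?c u, ?c v}" if "a \<in> S" for a
    using that unfolding S_def component_def by (auto intro: conn)
  have c_other: "u \<notin> ?c a \<and> v \<notin> ?c a" if "a \<in> V - S" for a
    using that unfolding S_def component_def by (auto intro: conn)
  have uv: "u \<in> ?c u" "v \<in> ?c v" "u \<in> S" "v \<in> S" "v \<notin> ?c u"
    using assms(3-5) unfolding S_def component_def by auto
  have V: "V = S \<union> (V - S)"
    unfolding S_def component_def by auto
  let ?Q = "?c ` (V - S)"
  have "?c' ` V = insert S ?Q"
  proof -
    have "?c' ` S = {S}" "?c' ` (V - S) = ?Q"
      using c'_S c'_other uv by auto
    then show ?thesis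
      by (subst V, subst image_Un) simp
  qed
  moreover have "?c ` V = insert (?c u) (insert (?c v) ?Q)"
  proof -
    have "?c ` S = {?c u, ?c v}"
      using c_S uv by blast
    then show ?thesis
      by (subst V, subst image_Un) simp
  qed
  moreover have "S \<notin> ?Q" "?c u \<notin> insert (?c v) ?Q" "?c v \<notin> ?Q"
    using c_other uv by fastforce+
  moreover have "finite ?Q"
    using assms(1) by simp
  ultimately show ?thesis
    unfolding num_comps_eq_card_components by simp
qed

section \<open>The cycle matroid of a multigraph\<close>

locale finite_multigraph =
  fixes V :: "'v set" and E :: "'e set" and inc :: "'e \<Rightarrow> 'v set"
  assumes multigraph: "multigraph V E inc"
begin

lemma finite_vertices: "finite V"
  using multigraph by (simp add: multigraph_def)

lemma edge_endpoints:
  assumes "x \<in> E"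
  obtains u v where "u \<in> V" "v \<in> V" "inc x = {u, v}"
proof -
  have sub: "inc x \<subseteq> V" and "card (inc x) = 1 \<or> card (inc x) = 2"
    using multigraph assms unfolding multigraph_def by auto
  then consider u where "inc x = {u}" | u v where "inc x = {u, v}"
    by (metis One_nat_def card_1_singleton_iff card_2_iff)
  then show thesis
    using that sub by cases auto
qed

lemma rank_of_insert:
  assumes "inc x = {u, v}" and "u \<in> V" and "v \<in> V"
  shows "rank_of V inc (insert x A) =
    (if connected_in inc A u v then rank_of V inc A else Suc (rank_of V inc A))"
proof (cases "connected_in inc A u v")
  case False
  then show ?thesis
    using num_comps_insert_disconnected[OF finite_vertices assms(1-3) False]
      num_comps_le_card[OF finite_vertices, of inc A]
    unfolding rank_of_def by simp
qed (simp add: rank_of_def num_comps_insert_connected[of inc x u v, OF assms(1)])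

lemma int_rank_of: "int (card V) - int (num_comps V inc E) = int (rank_of V inc E)"
  using num_comps_le_card[OF finite_vertices, of inc E] unfolding rank_of_def by simp

sublocale unit_rank E "rank_of V inc"
proof
  show "finite E"
    using multigraph by (simp add: multigraph_def)
  show "rank_of V inc {} = 0"
    by (simp add: rank_of_def num_comps_empty)
next
  fix x A assume "x \<in> E"
  then show "rank_of V inc (insert x A) = rank_of V inc A \<or>
      rank_of V inc (insert x A) = Suc (rank_of V inc A)"
    by (metis edge_endpoints rank_of_insert)
next
  fix x A B
  assume "x \<in> E" "A \<subseteq> B" and spanned: "rank_of V inc (insert x A) = rank_of V inc A"
  obtain u v where uv: "u \<in> V" "v \<in> V" "inc x = {u, v}"
    using edge_endpoints[OF \<open>x \<in> E\<close>] .
  then have "connected_in inc A u v"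
    using spanned rank_of_insert by (metis n_not_Suc_n)
  then have "connected_in inc B u v"
    by (rule connected_in_mono[OF \<open>A \<subseteq> B\<close>])
  then show "rank_of V inc (insert x B) = rank_of V inc B"
    using rank_of_insert[OF uv(3,1,2)] by simp
qed

abbreviation forests :: "'e set set" where
  "forests \<equiv> rank_indep E (rank_of V inc)"

lemma tutte_in_x_eq_tutte_y1: "tutte_in_x V E inc 1 = tutte_y1 forests"
proof -
  let ?t = "\<lambda>A. smult ((1 - 1 :: real) ^ (card A - rank_of V inc A))
    ([:-1, 1:] ^ (rank_of V inc E - rank_of V inc A))"
  have "sum ?t (Pow E) = (\<Sum>A\<in>forests. [:-1, 1:] ^ (rank_of V inc E - card A))"
  proof (rule sum.mono_neutral_cong_right)
    show "\<forall>A\<in>Pow E - forests. ?t A = 0"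
    proof
      fix A assume "A \<in> Pow E - forests"
      then have "card A - rank_of V inc A \<noteq> 0"
        by (auto simp: rank_indep_def)
      then show "?t A = 0"
        by simp
    qed
    show "?t A = [:-1, 1:] ^ (rank_of V inc E - card A)" if "A \<in> forests" for A
      using that by (simp add: rank_indep_iff)
  qed (auto simp: finite_ground rank_indep_def)
  then show ?thesis
    unfolding tutte_in_x_def tutte_y1_def matroid_rank_rank_indep .
qed

lemma cycle_imp_dependent:
  assumes "has_cycle_len V E inc l"
  obtains A where "A \<subseteq> E" "A \<notin> forests" "card A = l"
proof -
  obtain vs es where "l \<ge> 1" "length vs = l" "length es = l" "distinct es"
    "set vs \<subseteq> V" "set es \<subseteq> E"
    and edge: "\<And>j. j < l \<Longrightarrow> inc (es ! j) = {vs ! j, vs ! ((j + 1) mod l)}"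
    using assms unfolding has_cycle_len_def by blast
  define p where "p = l - 1"
  define P where "P = set (take p es)"
  have l: "l = Suc p"
    using \<open>l \<ge> 1\<close> unfolding p_def by simp
  have "set es = set (take (Suc p) es)"
    using \<open>length es = l\<close> l by simp
  also have "\<dots> = insert (es ! p) P"
    unfolding P_def using \<open>length es = l\<close> l by (subst take_Suc_conv_app_nth) simp_all
  finally have es: "set es = insert (es ! p) P" .
  have PE: "P \<subseteq> E"
    using \<open>set es \<subseteq> E\<close> es by blast
  have path: "connected_in inc P (vs ! 0) (vs ! j)" if "j \<le> p" for j
    using that
  proof (induction j)
    case (Suc j)
    have "j < length (take p es)"
      using Suc.prems \<open>length es = l\<close> l by simp
    then have "take p es ! j \<in> P"
      unfolding P_def by (rule nth_mem)
    then have "es ! j \<in> P"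
      using Suc.prems by simp
    moreover have "inc (es ! j) = {vs ! j, vs ! Suc j}"
      using edge[of j] Suc.prems l by simp
    ultimately have "adj_in inc P (vs ! j) (vs ! Suc j)"
      unfolding adj_in_def by blast
    then show ?case
      using Suc by (simp add: rtranclp.rtrancl_into_rtrancl)
  qed simp
  have "inc (es ! p) = {vs ! p, vs ! 0}"
    using edge[of p] l by simp
  moreover have "vs ! p \<in> V" "vs ! 0 \<in> V"
    using \<open>set vs \<subseteq> V\<close> \<open>length vs = l\<close> l by auto
  ultimately have "rank_of V inc (set es) = rank_of V inc P"
    unfolding es using rank_of_insert connected_in_sym[OF path[of p]] by simp
  also have "\<dots> \<le> card P"
    by (rule rank_le_card[OF PE])
  also have "\<dots> \<le> p"
    unfolding P_def using card_length[of "take p es"] by simp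
  finally have "set es \<notin> forests"
    using distinct_card[OF \<open>distinct es\<close>] \<open>length es = l\<close> l by (simp add: rank_indep_def)
  then show thesis
    using that \<open>set es \<subseteq> E\<close> distinct_card[OF \<open>distinct es\<close>] \<open>length es = l\<close> by blast
qed

lemma closing_edge_cycle:
  assumes "A \<subseteq> E" and "x \<in> E" and "x \<notin> A" and "inc x = {u, v}"
    and "connected_in inc A u v"
  shows "\<exists>l \<le> Suc (card A). has_cycle_len V E inc l"
proof -
  obtain xs where path: "rtrancl_path (adj_in inc A) u xs v" and "distinct (u # xs)"
    using assms(5) rtranclp_eq_rtrancl_path rtrancl_path_distinct by metis
  define vs where "vs = u # xs"
  define n where "n = length xs"
  have step: "\<exists>e. e \<in> A \<and> inc e = {vs ! j, vs ! Suc j}" if "j < n" for j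
    using rtrancl_path_nth[OF path, of j] that unfolding vs_def n_def adj_in_def by auto
  define es where "es = map (\<lambda>j. SOME e. e \<in> A \<and> inc e = {vs ! j, vs ! Suc j}) [0..<n]"
  have es_edge: "es ! j \<in> A" "inc (es ! j) = {vs ! j, vs ! Suc j}" if "j < n" for j
    using someI_ex[OF step[OF that]] that unfolding es_def by auto
  have "length es = n"
    unfolding es_def by simp
  have "set es \<subseteq> A"
    using es_edge(1) \<open>length es = n\<close> by (auto simp: in_set_conv_nth)
  have "distinct vs" and "length vs = Suc n"
    using \<open>distinct (u # xs)\<close> unfolding vs_def n_def by simp_all
  have "distinct es"
    unfolding distinct_conv_nth
  proof (intro allI impI notI)
    fix i j assume "i < length es" "j < length es" "i \<noteq> j" "es ! i = es ! j"
    then have "vs ! i \<in> {vs ! j, vs ! Suc j}" "vs ! j \<in> {vs ! i, vs ! Suc i}"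
      using es_edge(2) \<open>length es = n\<close> by (metis insertI1)+
    then show False
      using nth_eq_iff_index_eq[OF \<open>distinct vs\<close>] \<open>i < length es\<close> \<open>j < length es\<close>
        \<open>i \<noteq> j\<close> \<open>length es = n\<close> \<open>length vs = Suc n\<close>
      by auto
  qed
  have "vs ! n = v"
    using path rtrancl_path_last[OF path] unfolding vs_def n_def
    by (cases xs) (auto elim: rtrancl_path.cases simp: last_conv_nth)
  have "inc x \<subseteq> V"
    using multigraph assms(2) unfolding multigraph_def by blast
  then have "set vs \<subseteq> V"
  proof -
    have "vs ! Suc j \<in> V" if "j < n" for j
      using es_edge[OF that] assms(1) multigraph unfolding multigraph_def by blast
    moreover have "vs ! 0 \<in> V"
      using \<open>inc x \<subseteq> V\<close> assms(4) unfolding vs_def by simp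
    ultimately show ?thesis
      unfolding vs_def n_def by (auto simp: set_conv_nth less_Suc_eq_0_disj)
  qed
  have "has_cycle_len V E inc (Suc n)"
    unfolding has_cycle_len_def
  proof (intro conjI exI)
    show "length (es @ [x]) = Suc n" "distinct (es @ [x])" "set (es @ [x]) \<subseteq> E"
      using \<open>length es = n\<close> \<open>distinct es\<close> \<open>set es \<subseteq> A\<close> assms(1-3) by auto
    show "\<forall>j<Suc n. inc ((es @ [x]) ! j) = {vs ! j, vs ! ((j + 1) mod Suc n)}"
    proof (intro allI impI)
      fix j assume "j < Suc n"
      then consider "j < n" | "j = n"
        by linarith
      then show "inc ((es @ [x]) ! j) = {vs ! j, vs ! ((j + 1) mod Suc n)}"
      proof cases
        case 1
        then show ?thesis
          using es_edge(2) \<open>length es = n\<close> by (simp add: nth_append)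
      next
        case 2
        have "vs ! 0 = u"
          unfolding vs_def by simp
        with 2 show ?thesis
          using \<open>length es = n\<close> \<open>vs ! n = v\<close> assms(4) by (simp add: nth_append insert_commute)
      qed
    qed
  qed (use \<open>distinct vs\<close> \<open>set vs \<subseteq> V\<close> in \<open>auto simp: vs_def n_def\<close>)
  moreover have "n \<le> card A"
    using card_mono[OF finite_subset[OF assms(1) finite_ground] \<open>set es \<subseteq> A\<close>]
      distinct_card[OF \<open>distinct es\<close>] \<open>length es = n\<close> by simp
  ultimately show ?thesis
    by auto
qed

lemma dependent_imp_cycle:
  assumes "A \<subseteq> E" and "A \<notin> forests"
  shows "\<exists>l \<le> card A. has_cycle_len V E inc l"
  using finite_subset[OF assms(1) finite_ground] assms
proof (induction A rule: finite_subset_induct')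
  case empty
  then show ?case
    by (simp add: rank_indep_def)
next
  case (insert x F)
  show ?case
  proof (cases "F \<in> forests")
    case False
    then show ?thesis
      using insert by (meson card_insert_le le_trans)
  next
    case True
    obtain u v where uv: "u \<in> V" "v \<in> V" "inc x = {u, v}"
      using edge_endpoints[OF insert.hyps(2)] .
    have "connected_in inc F u v"
    proof (rule ccontr)
      assume "\<not> connected_in inc F u v"
      then have "rank_of V inc (insert x F) = card (insert x F)"
        using rank_of_insert[OF uv(3,1,2)] True insert.hyps by (simp add: rank_indep_iff)
      then show False
        using insert by (simp add: rank_indep_iff)
    qed
    then show ?thesis
      using closing_edge_cycle[OF insert.hyps(3,2,4) uv(3)] insert.hyps by simp
  qed
qed

lemma has_dependent_le_forests_iff:
  "has_dependent_le E forests k \<longleftrightarrow> (\<exists>l \<le> k. has_cycle_len V E inc l)"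
proof
  assume "has_dependent_le E forests k"
  then show "\<exists>l \<le> k. has_cycle_len V E inc l"
    unfolding has_dependent_le_def using dependent_imp_cycle by (meson le_trans)
next
  assume "\<exists>l \<le> k. has_cycle_len V E inc l"
  then show "has_dependent_le E forests k"
    unfolding has_dependent_le_def by (metis cycle_imp_dependent)
qed

end

lemma girth_gt_iff:
  assumes "has_cycle V E inc"
  shows "k < girth V E inc \<longleftrightarrow> \<not> (\<exists>l \<le> k. has_cycle_len V E inc l)"
proof -
  have "has_cycle_len V E inc (girth V E inc)"
    using assms unfolding has_cycle_def girth_def by (metis LeastI)
  moreover have "girth V E inc \<le> l" if "has_cycle_len V E inc l" for l
    using that unfolding girth_def by (rule Least_le)
  ultimately show ?thesis
    by (meson le_trans not_le)
qed

lemma int_binom_of_nat: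
  assumes "i \<le> r" and "r \<le> m"
  shows "int_binom (int m - int i - 1) (int r - int i) = real ((m - i - 1) choose (r - i))"
proof (cases "i < m")
  case True
  then have "int m - int i - 1 = int (m - i - 1)" and "nat (int r - int i) = r - i"
    using assms(1) by simp_all
  then show ?thesis
    unfolding int_binom_def using assms(1) by (simp add: binomial_gbinomial)
next
  case False
  \<comment> \<open>then i = r = m, and (-1) gchoose 0 = 1 = 0 choose 0\<close>
  then show ?thesis
    using assms unfolding int_binom_def by simp
qed

theorem corollary3p8:
  fixes V :: "'v set" and E :: "'e set" and inc :: "'e \<Rightarrow> 'v set" and i :: nat
  assumes "multigraph V E inc"
    and "has_cycle V E inc"
  shows "int (girth V E inc) > int (card V) - int (num_comps V inc E) - int i
     \<longleftrightarrow> coeff (tutte_in_x V E inc 1) i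
           = int_binom (int (card E) - int i - 1) (int (card V) - int (num_comps V inc E) - int i)"
proof -
  interpret finite_multigraph V E inc
    by (rule finite_multigraph.intro[OF assms(1)])
  define r where "r = rank_of V inc E"
  have rank: "matroid_rank forests = r"
    unfolding r_def by (rule matroid_rank_rank_indep)
  show ?thesis
  proof (cases "i \<le> r")
    case True
    have "r \<le> card E"
      unfolding r_def by (rule rank_le_card) simp
    have "int r - int i = int (r - i)"
      using True by simp
    show ?thesis
      using matroid_tutte_coeff_bound[OF matroid_rank_indep True[folded rank]]
      unfolding int_rank_of r_def[symmetric] tutte_in_x_eq_tutte_y1
        int_binom_of_nat[OF True \<open>r \<le> card E\<close>]
      unfolding \<open>int r - int i = int (r - i)\<close> of_nat_less_iff girth_gt_iff[OF assms(2)]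
        tutte_coeff_bound_def rank has_dependent_le_forests_iff
      by simp
  next
    case False
    then show ?thesis
      using matroid.coeff_tutte_y1_above_rank[OF matroid_rank_indep] rank
      unfolding int_rank_of r_def[symmetric] tutte_in_x_eq_tutte_y1 int_binom_def by simp
  qed
qed

end
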